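(* For any odd prime $p$, the Laurent series $\Theta_p(t)\in\mathbb{F}_p(\!(t^{-1})\!)$ is a quadratic irrational.
   Context: The $p$-Cantor sequence: for an odd prime $p$, $p_2=\frac{p-1}{2}$, identify $\{0,\dots,p-1\}$ with $\mathbb{F}_p$ and let $\phi_p(n)$ be the word of length $p$ whose $i$-th letter ($0\le i\le p-1$) is $n\binom{p_2}{i/2}\bmod p$ for even $i$ and $0$ for odd $i$; $\phi_p$ acts on words by concatenation. $(c^{(p)}_i)_{i\ge0}=\lim_n\phi_p^n(1)$ and $\Theta_p(t)=t^{-1}\sum_{i\ge0}c^{(p)}_it^{-i}$. A quadratic irrational is a Laurent series not in $\mathbb{F}_p(t)$ that satisfies a quadratic equation with coefficients in $\mathbb{F}_p[t]$. *)

theory Defs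
  imports "HOL-Computational_Algebra.Computational_Algebra" "HOL-Library.Cardinality"
begin

text \<open>The field F_p is modelled by a finite field type 'a with CARD('a) = p.
  The variable X of formal Laurent series stands for t^{-1}, so 'a fls is
  F_p((t^{-1})), and t corresponds to fls_X_inv.\<close>

definition phalf :: "nat \<Rightarrow> nat" where
  "phalf p = (p - 1) div 2"

definition cantor_letter :: "nat \<Rightarrow> 'a::field \<Rightarrow> 'a list" where
  "cantor_letter p n =
     map (\<lambda>i. if even i then n * of_nat (phalf p choose (i div 2)) else 0) [0..<p]"

definition cantor_morph :: "nat \<Rightarrow> 'a::field list \<Rightarrow> 'a list" where
  "cantor_morph p w = concat (map (cantor_letter p) w)"

text \<open>The limit word lim_n phi_p^n(1): its i-th letter is read off phi_p^(i+1)(1),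
  which has length p^(i+1) > i.\<close>
definition cantor_seq :: "nat \<Rightarrow> nat \<Rightarrow> 'a::field" where
  "cantor_seq p i = ((cantor_morph p ^^ Suc i) [1]) ! i"

definition Theta :: "nat \<Rightarrow> 'a::field fls" where
  "Theta p = fls_X * fps_to_fls (Abs_fps (cantor_seq p))"

definition poly_t :: "'a::field poly \<Rightarrow> 'a fls" where
  "poly_t P = poly (map_poly fls_const P) fls_X_inv"

definition quadratic_irrational :: "'a::field fls \<Rightarrow> bool" where
  "quadratic_irrational f \<longleftrightarrow>
     (\<not> (\<exists>P Q. Q \<noteq> 0 \<and> f * poly_t Q = poly_t P)) \<and>
     (\<exists>A B C. A \<noteq> 0 \<and> poly_t A * f ^ 2 + poly_t B * f + poly_t C = 0)"

end

theory Submission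
  imports Defs "HOL-Number_Theory.Residues"
begin

(* In base p, c_i is the product of the letters of phi_p(1) indexed by the digits of i, and
   these letters are the coefficients of E = (1 + X^2)^((p-1)/2).  So D = sum c_i X^i satisfies
   D = E * D(X^p).  In characteristic p we have (1 + X^2)^p = 1 + X^(2p), hence
   G = D^2 (1 + X^2) satisfies G = G(X^p) and G(0) = 1, which forces G = 1.  With X = 1/t and
   Theta = X D this reads (1 + t^2) Theta^2 = 1.  If Theta were rational, 1 + t^2 would be a
   square in F_p(t), hence in F_p[t] by a Euclidean descent, which is impossible as 2 <> 0. *)

lemma nth_concat_map_uniform:
  assumes "\<And>x. length (f x) = p" and "k < length w" and "r < p"
  shows "concat (map f w) ! (p * k + r) = f (w ! k) ! r"
  using assms(2)
proof (induction w arbitrary: k)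
  case (Cons x w)
  show ?case
  proof (cases k)
    case (Suc k')
    have "p * k + r = length (f x) + (p * k' + r)" using Suc assms(1) by simp
    then show ?thesis
      using Cons Suc by (simp only: concat.simps list.map nth_append_length_plus) simp
  qed (use assms in \<open>simp add: nth_append\<close>)
qed simp

lemma length_concat_map_uniform:
  assumes "\<And>x. length (f x) = p"
  shows "length (concat (map f w)) = p * length w"
  using assms by (induction w) simp_all

(* The product of e over the base-p digits of m; the guard p \<le> 1 only serves termination. *)
function digit_prod :: "nat \<Rightarrow> (nat \<Rightarrow> 'a::monoid_mult) \<Rightarrow> nat \<Rightarrow> 'a" where
  "digit_prod p e m = (if m = 0 \<or> p \<le> 1 then 1 else digit_prod p e (m div p) * e (m mod p))"
  by auto
termination by (relation "measure (\<lambda>(_, _, m). m)") auto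

declare digit_prod.simps [simp del]

lemma digit_prod_0 [simp]: "digit_prod p e 0 = 1"
  by (simp add: digit_prod.simps)

lemma digit_prod_div_mod:
  assumes "p > 1" and "e 0 = 1"
  shows "digit_prod p e m = digit_prod p e (m div p) * e (m mod p)"
  using assms by (cases "m = 0") (simp_all add: digit_prod.simps[of p e m])

lemma funpow_concat_map_nth:
  fixes e :: "nat \<Rightarrow> 'a::monoid_mult"
  assumes "p > 1" and "e 0 = 1"
    and len: "\<And>x. length (f x) = p" and nth: "\<And>x r. r < p \<Longrightarrow> f x ! r = x * e r"
  shows "i < p ^ n \<Longrightarrow> ((\<lambda>w. concat (map f w)) ^^ n) [1] ! i = digit_prod p e i"
proof (induction n arbitrary: i)
  case 0
  then show ?case by simp
next
  case (Suc n)
  let ?w = "((\<lambda>w. concat (map f w)) ^^ n) [1]"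
  have "length ?w = p ^ n"
    by (induction n) (simp_all add: len length_concat_map_uniform)
  moreover have "i div p < p ^ n" "i mod p < p"
    using Suc.prems \<open>p > 1\<close> by (simp_all add: less_mult_imp_div_less mult.commute)
  ultimately have "((\<lambda>w. concat (map f w)) ^^ Suc n) [1] ! i = ?w ! (i div p) * e (i mod p)"
    using nth_concat_map_uniform[OF len, of "i div p" ?w "i mod p"] by (simp add: nth)
  also have "\<dots> = digit_prod p e i"
    using Suc.IH \<open>i div p < p ^ n\<close> digit_prod_div_mod[of p e i] assms(1,2) by simp
  finally show ?case .
qed

lemma fps_digit_prod_eq_mult_compose:
  fixes e :: "nat \<Rightarrow> 'a::comm_ring_1"
  assumes "p > 1" and "e 0 = 1" and vanish: "\<And>i. i \<ge> p \<Longrightarrow> e i = 0"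
  shows "Abs_fps (digit_prod p e) = Abs_fps e * (Abs_fps (digit_prod p e) oo fps_X ^ p)"
proof (rule fps_ext)
  fix n
  let ?D = "digit_prod p e"
  let ?term = "\<lambda>i. e i * (if p dvd n - i then ?D ((n - i) div p) else 0)"
  have "(Abs_fps e * (Abs_fps ?D oo fps_X ^ p)) $ n = (\<Sum>i=0..n. ?term i)"
    by (simp add: fps_mult_nth fps_nth_compose_X_power cong: if_cong)
  also have "\<dots> = (\<Sum>i\<in>{n mod p}. ?term i)"
  proof (rule sum.mono_neutral_right)
    show "\<forall>i\<in>{0..n} - {n mod p}. ?term i = 0"
    proof
      fix i assume i: "i \<in> {0..n} - {n mod p}"
      show "?term i = 0"
      proof (cases "i < p")
        case True
        then have "\<not> p dvd n - i"
          using i mod_eq_dvd_iff_nat[of i n p] by auto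
        then show ?thesis by simp
      qed (simp add: vanish)
    qed
  qed auto
  also have "\<dots> = ?D (n div p) * e (n mod p)"
    by (simp add: minus_mod_eq_mult_div)
  also have "\<dots> = ?D n"
    using digit_prod_div_mod[of p e n] assms(1,2) by simp
  finally show "Abs_fps ?D $ n = (Abs_fps e * (Abs_fps ?D oo fps_X ^ p)) $ n"
    by simp
qed

lemma fps_compose_X_power_fixed_eq_const:
  fixes G :: "'a::comm_ring_1 fps"
  assumes "p > 1" and fixed: "G oo fps_X ^ p = G"
  shows "G = fps_const (G $ 0)"
proof (rule fps_ext)
  fix n
  show "G $ n = fps_const (G $ 0) $ n"
  proof (induction n rule: less_induct)
    case (less n)
    show ?case
    proof (cases "n > 0 \<and> p dvd n")
      case True
      then have "n div p < n" using \<open>p > 1\<close> by simp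
      then show ?thesis
        using less.IH[of "n div p"] True fixed fps_nth_compose_X_power[of G p n] by auto
    next
      case False
      then show ?thesis
        using fixed fps_nth_compose_X_power[of G p n] by (cases "n = 0") auto
    qed
  qed
qed

lemma fps_one_plus_X2_power_nth:
  "((1 + fps_X ^ 2 :: 'a::comm_ring_1 fps) ^ m) $ i =
     (if even i then of_nat (m choose (i div 2)) else 0)"
proof -
  have "(1 + fps_X ^ 2 :: 'a fps) ^ m =
      (\<Sum>k\<le>m. fps_const (of_nat (m choose k)) * fps_X ^ (2 * k))"
    using binomial_ring[of "fps_X ^ 2 :: 'a fps" 1 m]
    by (simp add: add.commute fps_of_nat power_mult)
  then have "((1 + fps_X ^ 2 :: 'a fps) ^ m) $ i =
      (\<Sum>k\<le>m. of_nat (m choose k) * (if i = 2 * k then 1 else 0))"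
    by (simp add: fps_sum_nth)
  also have "\<dots> = (\<Sum>k\<le>m. if i = 2 * k then of_nat (m choose k) else 0)"
    by (rule sum.cong) simp_all
  also have "\<dots> = (if even i then of_nat (m choose (i div 2)) else 0)"
  proof (cases "even i")
    case True
    then obtain j where "i = 2 * j" by (elim evenE)
    then show ?thesis by (simp add: binomial_eq_0)
  qed (auto intro!: sum.neutral)
  finally show ?thesis .
qed

lemma fps_one_plus_X_power_CHAR:
  assumes "prime p" and "CHAR('a::idom) = p"
  shows "(1 + fps_X ^ k :: 'a fps) ^ p = (1 + fps_X ^ k) oo fps_X ^ p"
proof -
  have "(1 + fps_X ^ k :: 'a fps) ^ p = 1 ^ p + (fps_X ^ k) ^ p"
    using assms by (intro freshmans_dream) simp_all
  also have "\<dots> = (1 + fps_X ^ k) oo fps_X ^ p"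
    using prime_gt_0_nat[OF assms(1)]
    by (simp add: fps_compose_add_distrib fps_X_power_compose flip: power_mult)
  finally show ?thesis .
qed

lemma CHAR_eq_CARD_if_prime:
  assumes "prime CARD('a::{idom,finite})"
  shows "CHAR('a) = CARD('a)"
proof -
  have "CHAR('a) dvd CARD('a)"
    using CHAR_dvd_CARD[where 'a='a] by simp
  then show ?thesis
    using assms CHAR_not_1'[where 'a='a] by (auto simp: prime_nat_iff)
qed

abbreviation cantor_letter_fps :: "nat \<Rightarrow> 'a::comm_ring_1 fps" where
  "cantor_letter_fps p \<equiv> (1 + fps_X ^ 2) ^ phalf p"

lemma length_cantor_letter [simp]: "length (cantor_letter p x) = p"
  by (simp add: cantor_letter_def)

lemma cantor_letter_nth:
  "r < p \<Longrightarrow> cantor_letter p x ! r = x * cantor_letter_fps p $ r"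
  by (simp add: cantor_letter_def fps_one_plus_X2_power_nth)

lemma cantor_fps_nth_ge:
  assumes "odd p" and "i \<ge> p"
  shows "cantor_letter_fps p $ i = 0"
proof -
  have "phalf p < i div 2" if "even i"
    using assms that by (auto simp: phalf_def elim!: oddE evenE)
  then show ?thesis by (simp add: fps_one_plus_X2_power_nth binomial_eq_0)
qed

lemma cantor_seq_eq_digit_prod:
  assumes "p > 1"
  shows "cantor_seq p = digit_prod p (($) (cantor_letter_fps p :: 'a::field fps))"
proof
  fix i
  have "i < p ^ Suc i"
    using assms power_gt_expt[of p "Suc i"] by simp
  then show "cantor_seq p i = digit_prod p (($) (cantor_letter_fps p :: 'a fps)) i"
    unfolding cantor_seq_def cantor_morph_def
    using assms by (intro funpow_concat_map_nth)
      (simp_all add: cantor_letter_nth fps_one_plus_X2_power_nth)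
qed

lemma cantor_series_square_mult_one_plus_X2:
  assumes "prime p" and "odd p" and "CHAR('a::field) = p"
  shows "Abs_fps (cantor_seq p) ^ 2 * (1 + fps_X ^ 2) = (1 :: 'a fps)"
proof -
  define Y where "Y = (1 + fps_X ^ 2 :: 'a fps)"
  define D where "D = (Abs_fps (cantor_seq p) :: 'a fps)"
  define G where "G = D ^ 2 * Y"
  have "p > 1" using assms(1) prime_gt_1_nat by blast
  have "Y ^ p = (Y ^ phalf p) ^ 2 * Y"
  proof -
    have "p = 2 * phalf p + 1" using assms(2) by (auto simp: phalf_def elim!: oddE)
    then have "Y ^ p = Y ^ (2 * phalf p + 1)" by simp
    then show ?thesis by (simp add: power_add power_mult mult.commute)
  qed
  have mahler: "D = Y ^ phalf p * (D oo fps_X ^ p)"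
    unfolding D_def Y_def cantor_seq_eq_digit_prod[OF \<open>p > 1\<close>]
    using \<open>p > 1\<close> cantor_fps_nth_ge[OF assms(2)]
    by (subst fps_digit_prod_eq_mult_compose)
      (simp_all add: fps_nth_inverse fps_one_plus_X2_power_nth[where i = 0])
  have "G oo fps_X ^ p = (D oo fps_X ^ p) ^ 2 * Y ^ p"
    using \<open>p > 1\<close> assms(1,3)
    by (simp add: G_def Y_def fps_compose_mult_distrib fps_compose_power fps_one_plus_X_power_CHAR)
  also have "\<dots> = (Y ^ phalf p * (D oo fps_X ^ p)) ^ 2 * Y"
    unfolding \<open>Y ^ p = (Y ^ phalf p) ^ 2 * Y\<close> by (simp add: power_mult_distrib mult_ac)
  also have "\<dots> = G"
    unfolding G_def by (simp only: mahler[symmetric])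
  finally have "G = fps_const (G $ 0)"
    using \<open>p > 1\<close> by (intro fps_compose_X_power_fixed_eq_const) simp
  moreover have "G $ 0 = 1"
    using \<open>p > 1\<close>
    by (simp add: G_def D_def Y_def fps_power_zeroth cantor_seq_eq_digit_prod)
  ultimately have "G = 1" by simp
  then show ?thesis unfolding G_def D_def Y_def .
qed

lemma poly_t_0 [simp]: "poly_t 0 = 0"
  by (simp add: poly_t_def)

lemma poly_t_pCons: "poly_t (pCons a P) = fls_const a + fls_X_inv * poly_t P"
  by (simp add: poly_t_def map_poly_pCons)

lemma fls_nth_poly_t:
  "fls_nth (poly_t P) n = (if n \<le> 0 then Polynomial.coeff P (nat (- n)) else 0)"
proof (induction P arbitrary: n rule: pCons_induct)
  case (pCons a P)
  have "fls_nth (poly_t (pCons a P)) n = (if n = 0 then a else 0) + fls_nth (poly_t P) (n + 1)"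
    by (simp add: poly_t_pCons fls_X_inv_times_conv_shift)
  also have "\<dots> = (if n \<le> 0 then Polynomial.coeff (pCons a P) (nat (- n)) else 0)"
  proof (cases "n < 0")
    case True
    then have "nat (- n) = Suc (nat (- (n + 1)))" by simp
    then show ?thesis using True pCons.IH by simp
  qed (use pCons.IH in auto)
  finally show ?case .
qed simp

lemma inj_poly_t: "inj poly_t"
proof (rule injI)
  fix P Q :: "'a::field poly"
  assume "poly_t P = poly_t Q"
  then have "fls_nth (poly_t P) (- int i) = fls_nth (poly_t Q) (- int i)" for i by simp
  then show "P = Q" by (intro poly_eqI) (simp add: fls_nth_poly_t)
qed

lemma map_poly_add_hom:
  assumes "f 0 = 0" and "\<And>x y. f (x + y) = f x + f y"
  shows "map_poly f (P + Q) = map_poly f P + map_poly f Q"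
  by (intro poly_eqI) (simp add: assms coeff_map_poly)

lemma map_poly_mult_hom:
  fixes f :: "'a::comm_semiring_0 \<Rightarrow> 'b::comm_semiring_0"
  assumes "f 0 = 0" and "\<And>x y. f (x + y) = f x + f y" and "\<And>x y. f (x * y) = f x * f y"
  shows "map_poly f (P * Q) = map_poly f P * map_poly f Q"
  by (induction P rule: pCons_induct)
     (simp_all add: assms map_poly_add_hom map_poly_smult map_poly_pCons)

lemma poly_t_mult: "poly_t (P * Q) = poly_t P * poly_t Q"
  unfolding poly_t_def by (subst map_poly_mult_hom) (simp_all add: fls_plus_const)

lemma poly_t_1 [simp]: "poly_t 1 = 1"
  by (simp add: poly_t_def)

lemma poly_t_power: "poly_t (P ^ n) = poly_t P ^ n"
  by (induction n) (simp_all add: poly_t_mult)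

lemma square_ne_quadratic_without_linear_term:
  fixes R :: "'a::idom poly"
  assumes "(2::'a) \<noteq> 0" and "c \<noteq> 0" and "d \<noteq> 0"
  shows "R ^ 2 \<noteq> [:c, 0, d:]"
proof
  assume sq: "R ^ 2 = [:c, 0, d:]"
  then have "R \<noteq> 0" using assms(2) by auto
  then have "2 * degree R = 2"
    using sq assms(3) degree_power_eq[of R 2] by simp
  define a b where "a = Polynomial.coeff R 0" and "b = Polynomial.coeff R 1"
  have "R = [:a, b:]"
    using \<open>2 * degree R = 2\<close> unfolding a_def b_def
    by (intro poly_eqI) (auto simp: coeff_pCons coeff_eq_0 split: nat.splits)
  then have "R ^ 2 = [:a * a, 2 * a * b, b * b:]"
    by (simp add: power2_eq_square algebra_simps)
  then have "a * a = c" "2 * a * b = 0" "b * b = d"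
    using sq by simp_all
  then show False using assms by auto
qed

lemma square_if_mult_square_eq_square:
  fixes A P Q :: "'a::field poly"
  assumes "A * P ^ 2 = Q ^ 2" and "P \<noteq> 0"
  shows "\<exists>S. A = S ^ 2"
  using assms
proof (induction "degree P" arbitrary: P Q rule: less_induct)
  case less
  define S R where "S = Q div P" and "R = Q mod P"
  have R: "R = Q - S * P" by (simp add: S_def R_def minus_div_mult_eq_mod)
  show ?case
  proof (cases "R = 0")
    case True
    then have "A * P ^ 2 = S ^ 2 * P ^ 2"
      using less.prems(1) R by (simp add: power_mult_distrib)
    then show ?thesis using less.prems(2) by auto
  next
    case False
    then have "degree R < degree P"
      using less.prems(2) by (simp add: R_def degree_mod_less')
    moreover have "A * R ^ 2 = (A * P - S * Q) ^ 2"
    proof -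
      (* (A P - S Q) + R sqrt A = (Q + P sqrt A)(sqrt A - S) has norm zero *)
      have "(A * P - S * Q) ^ 2 - A * R ^ 2 = (A - S ^ 2) * (A * P ^ 2 - Q ^ 2)"
        unfolding R by (simp add: algebra_simps power2_eq_square)
      then show ?thesis using less.prems(1) by simp
    qed
    ultimately show ?thesis using less.hyps False by blast
  qed
qed

lemma not_rational_if_one_plus_t2_mult_square_eq_1:
  fixes f :: "'a::field fls"
  assumes "(2::'a) \<noteq> 0" and root: "poly_t [:1, 0, 1:] * f ^ 2 = 1"
  shows "\<not> (\<exists>P Q. Q \<noteq> 0 \<and> f * poly_t Q = poly_t P)"
proof
  assume "\<exists>P Q. Q \<noteq> 0 \<and> f * poly_t Q = poly_t P"
  then obtain P Q where "Q \<noteq> 0" and PQ: "f * poly_t Q = poly_t P" by blast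
  have "poly_t ([:1, 0, 1:] * P ^ 2) = poly_t [:1, 0, 1:] * (f * poly_t Q) ^ 2"
    by (simp only: poly_t_mult poly_t_power PQ)
  also have "\<dots> = (poly_t [:1, 0, 1:] * f ^ 2) * poly_t Q ^ 2"
    by (simp add: power_mult_distrib)
  also have "\<dots> = poly_t (Q ^ 2)"
    by (simp add: root poly_t_power)
  finally have eq: "[:1, 0, 1:] * P ^ 2 = Q ^ 2"
    by (rule injD[OF inj_poly_t])
  then have "P \<noteq> 0" using \<open>Q \<noteq> 0\<close> by auto
  then obtain S :: "'a poly" where "[:1, 0, 1:] = S ^ 2"
    using square_if_mult_square_eq_square[OF eq] by blast
  then show False
    using square_ne_quadratic_without_linear_term[OF assms(1), of 1 1 S] by simp
qed

lemma one_plus_t2_mult_Theta_square: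
  assumes "prime p" and "odd p" and "CHAR('a::field) = p"
  shows "poly_t [:1, 0, 1:] * Theta p ^ 2 = (1 :: 'a fls)"
proof -
  define F where "F = fps_to_fls (Abs_fps (cantor_seq p) :: 'a fps)"
  have "fls_X_inv * fls_X = (1 :: 'a fls)"
    by (simp flip: fls_inverse_X)
  have "poly_t [:1, 0, 1:] * Theta p ^ 2 =
      (fls_X * fls_X + (fls_X_inv * fls_X) * (fls_X_inv * fls_X)) * F ^ 2"
    by (simp add: Theta_def F_def poly_t_pCons power2_eq_square algebra_simps)
  also have "\<dots> = (fls_X ^ 2 + 1) * F ^ 2"
    by (simp only: \<open>fls_X_inv * fls_X = 1\<close>) (simp add: power2_eq_square)
  also have "\<dots> = fps_to_fls (Abs_fps (cantor_seq p) ^ 2 * (1 + fps_X ^ 2))"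
    by (simp add: F_def fls_times_fps_to_fls fps_to_fls_power add.commute mult.commute)
  also have "\<dots> = 1"
    using cantor_series_square_mult_one_plus_X2[OF assms] by simp
  finally show ?thesis .
qed

theorem lemma5p8:
  fixes p :: nat
  assumes "prime p" and "odd p" and "CARD('a) = p"
  shows "quadratic_irrational (Theta p :: 'a::{field,finite} fls)"
proof -
  have char: "CHAR('a) = p"
    using CHAR_eq_CARD_if_prime[where 'a='a] assms(1,3) by simp
  have "(2::'a) \<noteq> 0"
  proof
    assume "(2::'a) = 0"
    then have "p dvd 2"
      using char of_nat_eq_0_iff_char_dvd[of 2, where 'a='a] by simp
    then show False
      using assms(1,2) primes_dvd_imp_eq[of p 2] by auto
  qed
  moreover have "poly_t [:1, 0, 1:] * Theta p ^ 2 = (1 :: 'a fls)"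
    using assms(1,2) char by (rule one_plus_t2_mult_Theta_square)
  ultimately show ?thesis
    unfolding quadratic_irrational_def
    by (intro conjI not_rational_if_one_plus_t2_mult_square_eq_1 exI[of _ "[:1, 0, 1:]"]
        exI[of _ 0] exI[of _ "[:-1:]"]) (simp_all add: poly_t_pCons)
qed

end
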